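(* Let $\mathcal{G}$ be a groupoid, $\mathbb{K}$ a field, $(A,+,\cdot)$ a $\mathbb{K}$-cancellative $\mathbb{K}$-algebra with associated $\mathbb{K}$-cancellative semigroup $A'=(A,\cdot)$, and $\alpha = (\{ D_g \}, \{ \alpha_g \}, \{ w_{g,h} \})$ a groupoid twisted partial action of $\mathcal{G}$ on $A$ with each $w_{x,y} = k(x,y) \in \mathbb{K}$, so that $\alpha'=(\{D_g\},\{\alpha_g\},\sigma)$ with $\sigma(x,y)=k(x,y)$ is a groupoid twisted partial action of $\mathcal{G}$ on $A'$. Then the map $A' \rtimes_{\alpha',\sigma} \mathcal{G} \to (A \rtimes_{\alpha} \mathcal{G})'$, $a\delta_x\mapsto a\delta_x$, is a monomorphism of $\mathbb{K}$-semigroups, where $(A \rtimes_{\alpha} \mathcal{G})'$ is the $\mathbb{K}$-cancellative semigroup obtained from the algebra $A \rtimes_{\alpha} \mathcal{G}$ by forgetting addition.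
   Context: Groupoid: nonempty set with partial associative product, each $x$ with right identity $d(x)=x^{-1}x$, left identity $r(x)=xx^{-1}$ and inverse; $xy$ defined iff $d(x)=r(y)$; $\mathcal{G}^2$ composable pairs. A $\mathbb{K}$-semigroup is a semigroup with zero and compatible scalar action ($\alpha(\beta s)=(\alpha\beta)s$, $1s=s$, $\alpha(st)=(\alpha s)t=s(\alpha t)$, $0s=0$); $\mathbb{K}$-cancellative if $\alpha s=\beta s$, $s\neq0$ imply $\alpha=\beta$; a $\mathbb{K}$-algebra is $\mathbb{K}$-cancellative if its multiplicative semigroup is. For a unital ideal $I$ of $A$ with identity $1_I\ne0$, $\mathbb{K}$ is identified with $\mathbb{K}1_I$. Ring crossed product: for a groupoid twisted partial action $\alpha=(\{D_g\},\{\alpha_g\},\{w_{g,h}\})$ on $A$ (ideals $D_{r(g)}$ of $A$, $D_g$ ideals of $D_{r(g)}$, ring isomorphisms $\alpha_g:D_{g^{-1}}\to D_g$, invertible multipliers $w_{g,h}$ of $D_gD_{gh}$, satisfying the twisted partial action axioms), $A\rtimes_\alpha\mathcal{G}=\bigoplus_gD_g\delta_g$ with $(a\delta_x)(b\delta_y)=\alpha_x(\alpha_x^{-1}(a)b)w_{x,y}\delta_{xy}$ if $(x,y)\in\mathcal{G}^2$ and $0$ otherwise. Semigroup crossed product: for a groupoid twisted partial action $(\theta,\sigma)=(\{S_x\},\{\theta_x\},\sigma)$ of $\mathcal{G}$ on a $\mathbb{K}$-semigroup $S$ (monoid ideals $S_x\subseteq S_{r(x)}$, $\mathbb{K}$-linear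 semigroup isomorphisms $\theta_x:S_{x^{-1}}\to S_x$, $\sigma:\mathcal{G}\times\mathcal{G}\to\mathbb{K}$ satisfying the axioms, $\sigma(x,y)=0$ when $xy$ is undefined), let $L=\{a\delta_x: x\in\mathcal{G}, a\in S_x\}\cup\{0\}$ with $(a\delta_x)(b\delta_y)=\theta_x(\theta_x^{-1}(a)b)\sigma(x,y)\delta_{xy}$ if $xy$ is defined, $0$ otherwise, and $0$ absorbing; $S\rtimes_{\theta,\sigma}\mathcal{G}=L/I$ with $I=\{0\delta_x:x\in\mathcal{G}\}\cup\{0\}$. *)

theory Defs
  imports Main
begin

text \<open>A groupoid is a set G with a (total, in HOL) multiplication gm and inversion gi;
  the product gm x y is regarded as defined iff gdom x = gran y.\<close>

definition gdom :: "('g \<Rightarrow> 'g \<Rightarrow> 'g) \<Rightarrow> ('g \<Rightarrow> 'g) \<Rightarrow> 'g \<Rightarrow> 'g" where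
  "gdom gm gi x = gm (gi x) x"

definition gran :: "('g \<Rightarrow> 'g \<Rightarrow> 'g) \<Rightarrow> ('g \<Rightarrow> 'g) \<Rightarrow> 'g \<Rightarrow> 'g" where
  "gran gm gi x = gm x (gi x)"

definition composable :: "'g set \<Rightarrow> ('g \<Rightarrow> 'g \<Rightarrow> 'g) \<Rightarrow> ('g \<Rightarrow> 'g) \<Rightarrow> 'g \<Rightarrow> 'g \<Rightarrow> bool" where
  "composable G gm gi x y \<longleftrightarrow> x \<in> G \<and> y \<in> G \<and> gdom gm gi x = gran gm gi y"

definition groupoid :: "'g set \<Rightarrow> ('g \<Rightarrow> 'g \<Rightarrow> 'g) \<Rightarrow> ('g \<Rightarrow> 'g) \<Rightarrow> bool" where
  "groupoid G gm gi \<longleftrightarrow>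
     G \<noteq> {} \<and>
     (\<forall>x\<in>G. gi x \<in> G \<and> gi (gi x) = x) \<and>
     (\<forall>x y. composable G gm gi x y \<longrightarrow>
        gm x y \<in> G \<and> gdom gm gi (gm x y) = gdom gm gi y \<and> gran gm gi (gm x y) = gran gm gi x) \<and>
     (\<forall>x y z. composable G gm gi x y \<and> composable G gm gi y z \<longrightarrow>
        gm (gm x y) z = gm x (gm y z)) \<and>
     (\<forall>x\<in>G. gm x (gdom gm gi x) = x \<and> gm (gran gm gi x) x = x \<and>
        gdom gm gi (gdom gm gi x) = gdom gm gi x \<and> gran gm gi (gdom gm gi x) = gdom gm gi x \<and>
        gdom gm gi (gran gm gi x) = gran gm gi x \<and> gran gm gi (gran gm gi x) = gran gm gi x)"

text \<open>The algebra A is the whole (not necessarily unital) ring type 'a, with a scalar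
  action smul of the field 'k.\<close>

definition K_algebra :: "('k::field \<Rightarrow> 'a::ring \<Rightarrow> 'a) \<Rightarrow> bool" where
  "K_algebra smul \<longleftrightarrow>
     (\<forall>\<alpha> \<beta> a. smul \<alpha> (smul \<beta> a) = smul (\<alpha> * \<beta>) a) \<and>
     (\<forall>a. smul 1 a = a) \<and>
     (\<forall>\<alpha> a b. smul \<alpha> (a + b) = smul \<alpha> a + smul \<alpha> b) \<and>
     (\<forall>\<alpha> \<beta> a. smul (\<alpha> + \<beta>) a = smul \<alpha> a + smul \<beta> a) \<and>
     (\<forall>\<alpha> a b. smul \<alpha> (a * b) = smul \<alpha> a * b \<and> smul \<alpha> (a * b) = a * smul \<alpha> b)"

definition K_cancellative :: "('k \<Rightarrow> 's \<Rightarrow> 's) \<Rightarrow> 's \<Rightarrow> bool" where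
  "K_cancellative smul z \<longleftrightarrow> (\<forall>\<alpha> \<beta> s. smul \<alpha> s = smul \<beta> s \<and> s \<noteq> z \<longrightarrow> \<alpha> = \<beta>)"

definition alg_ideal :: "('k \<Rightarrow> 'a::ring \<Rightarrow> 'a) \<Rightarrow> 'a set \<Rightarrow> 'a set \<Rightarrow> bool" where
  "alg_ideal smul R I \<longleftrightarrow> I \<subseteq> R \<and> 0 \<in> I \<and>
     (\<forall>a\<in>I. \<forall>b\<in>I. a + b \<in> I) \<and> (\<forall>a\<in>I. - a \<in> I) \<and>
     (\<forall>r\<in>R. \<forall>a\<in>I. r * a \<in> I \<and> a * r \<in> I) \<and> (\<forall>\<alpha>. \<forall>a\<in>I. smul \<alpha> a \<in> I)"

definition unital_set :: "'a::ring set \<Rightarrow> bool" where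
  "unital_set I \<longleftrightarrow> (\<exists>u\<in>I. \<forall>a\<in>I. u * a = a \<and> a * u = a)"

inductive_set ideal_prod :: "'a::ring set \<Rightarrow> 'a set \<Rightarrow> 'a set" for I J where
  zero: "0 \<in> ideal_prod I J"
| prod: "a \<in> I \<Longrightarrow> b \<in> J \<Longrightarrow> a * b \<in> ideal_prod I J"
| add: "x \<in> ideal_prod I J \<Longrightarrow> y \<in> ideal_prod I J \<Longrightarrow> x + y \<in> ideal_prod I J"

text \<open>A multiplier of I is a pair (L,R); w a = L a and a w = R a.\<close>
definition is_multiplier :: "'a::ring set \<Rightarrow> ('a \<Rightarrow> 'a) \<times> ('a \<Rightarrow> 'a) \<Rightarrow> bool" where
  "is_multiplier I w \<longleftrightarrow>
     (\<forall>a\<in>I. fst w a \<in> I \<and> snd w a \<in> I) \<and>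
     (\<forall>a\<in>I. \<forall>b\<in>I. fst w (a + b) = fst w a + fst w b \<and> snd w (a + b) = snd w a + snd w b \<and>
        fst w (a * b) = fst w a * b \<and> snd w (a * b) = a * snd w b \<and>
        snd w a * b = a * fst w b)"

definition inverse_multiplier :: "'a::ring set \<Rightarrow> ('a \<Rightarrow> 'a) \<times> ('a \<Rightarrow> 'a) \<Rightarrow> ('a \<Rightarrow> 'a) \<times> ('a \<Rightarrow> 'a) \<Rightarrow> bool" where
  "inverse_multiplier I w w' \<longleftrightarrow> is_multiplier I w' \<and>
     (\<forall>a\<in>I. fst w (fst w' a) = a \<and> fst w' (fst w a) = a \<and> snd w (snd w' a) = a \<and> snd w' (snd w a) = a)"

definition invertible_multiplier :: "'a::ring set \<Rightarrow> ('a \<Rightarrow> 'a) \<times> ('a \<Rightarrow> 'a) \<Rightarrow> bool" where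
  "invertible_multiplier I w \<longleftrightarrow> is_multiplier I w \<and> (\<exists>w'. inverse_multiplier I w w')"

definition preim :: "('g \<Rightarrow> 'a set) \<Rightarrow> ('g \<Rightarrow> 'a \<Rightarrow> 'a) \<Rightarrow> ('g \<Rightarrow> 'g) \<Rightarrow> 'g \<Rightarrow> 'a set \<Rightarrow> 'a set" where
  "preim D \<alpha> gi h S = {a \<in> D (gi h). \<alpha> h a \<in> S}"

definition ring_twisted_partial_action ::
  "'g set \<Rightarrow> ('g \<Rightarrow> 'g \<Rightarrow> 'g) \<Rightarrow> ('g \<Rightarrow> 'g) \<Rightarrow> ('k::field \<Rightarrow> 'a::ring \<Rightarrow> 'a) \<Rightarrow>
   ('g \<Rightarrow> 'a set) \<Rightarrow> ('g \<Rightarrow> 'a \<Rightarrow> 'a) \<Rightarrow> ('g \<Rightarrow> 'g \<Rightarrow> ('a \<Rightarrow> 'a) \<times> ('a \<Rightarrow> 'a)) \<Rightarrow> bool" where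
  "ring_twisted_partial_action G gm gi smul D \<alpha> w \<longleftrightarrow>
     (\<forall>g\<in>G. alg_ideal smul UNIV (D (gran gm gi g)) \<and>
            alg_ideal smul (D (gran gm gi g)) (D g) \<and>
            bij_betw (\<alpha> g) (D (gi g)) (D g) \<and>
            (\<forall>a\<in>D (gi g). \<forall>b\<in>D (gi g). \<alpha> g (a + b) = \<alpha> g a + \<alpha> g b \<and> \<alpha> g (a * b) = \<alpha> g a * \<alpha> g b)) \<and>
     (\<forall>g\<in>G. \<forall>a\<in>D (gdom gm gi g). \<alpha> (gdom gm gi g) a = a) \<and>
     (\<forall>g h. composable G gm gi g h \<longrightarrow>
        preim D \<alpha> gi h (D (gi g) \<inter> D h) \<subseteq> D (gi (gm g h))) \<and>
     (\<forall>g h. composable G gm gi g h \<longrightarrow>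
        invertible_multiplier (ideal_prod (D g) (D (gm g h))) (w g h) \<and>
        (\<exists>w'. inverse_multiplier (ideal_prod (D g) (D (gm g h))) (w g h) w' \<and>
           (\<forall>a \<in> preim D \<alpha> gi h (D (gi g) \<inter> D h).
              \<alpha> g (\<alpha> h a) = snd w' (fst (w g h) (\<alpha> (gm g h) a))))) \<and>
     (\<forall>g\<in>G. (\<forall>c\<in>ideal_prod (D g) (D (gm g (gdom gm gi g))).
                 fst (w g (gdom gm gi g)) c = c \<and> snd (w g (gdom gm gi g)) c = c) \<and>
            (\<forall>c\<in>ideal_prod (D (gran gm gi g)) (D (gm (gran gm gi g) g)).
                 fst (w (gran gm gi g) g) c = c \<and> snd (w (gran gm gi g) g) c = c)) \<and>
     (\<forall>g h l. composable G gm gi g h \<and> composable G gm gi h l \<longrightarrow>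
        (\<forall>a\<in>ideal_prod (ideal_prod (D (gi g)) (D h)) (D (gm h l)).
           snd (w g (gm h l)) (\<alpha> g (snd (w h l) a)) = snd (w (gm g h) l) (snd (w g h) (\<alpha> g a))))"

definition rcp_carrier :: "'g set \<Rightarrow> ('g \<Rightarrow> 'a::ring set) \<Rightarrow> ('g \<Rightarrow> 'a) set" where
  "rcp_carrier G D = {f. finite {g. f g \<noteq> 0} \<and> (\<forall>g. f g \<noteq> 0 \<longrightarrow> g \<in> G \<and> f g \<in> D g)}"

definition rcp_mult ::
  "'g set \<Rightarrow> ('g \<Rightarrow> 'g \<Rightarrow> 'g) \<Rightarrow> ('g \<Rightarrow> 'g) \<Rightarrow> ('g \<Rightarrow> 'a::ring set) \<Rightarrow> ('g \<Rightarrow> 'a \<Rightarrow> 'a) \<Rightarrow>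
   ('g \<Rightarrow> 'g \<Rightarrow> ('a \<Rightarrow> 'a) \<times> ('a \<Rightarrow> 'a)) \<Rightarrow> ('g \<Rightarrow> 'a) \<Rightarrow> ('g \<Rightarrow> 'a) \<Rightarrow> ('g \<Rightarrow> 'a)" where
  "rcp_mult G gm gi D \<alpha> w f h = (\<lambda>z.
     \<Sum>(x, y) \<in> {(x, y). composable G gm gi x y \<and> gm x y = z \<and> f x \<noteq> 0 \<and> h y \<noteq> 0}.
        snd (w x y) (\<alpha> x (inv_into (D (gi x)) (\<alpha> x) (f x) * h y)))"

definition rcp_smul :: "('k \<Rightarrow> 'a \<Rightarrow> 'a) \<Rightarrow> 'k \<Rightarrow> ('g \<Rightarrow> 'a) \<Rightarrow> ('g \<Rightarrow> 'a)" where
  "rcp_smul smul c f = (\<lambda>g. smul c (f g))"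

definition rcp_zero :: "'g \<Rightarrow> 'a::ring" where
  "rcp_zero = (\<lambda>g. 0)"

text \<open>Elements of L/I: None is the zero, Some (a, x) with a in D x nonzero is a\<delta>_x;
  all 0\<delta>_x are identified with the zero.\<close>

definition scp_carrier :: "'g set \<Rightarrow> ('g \<Rightarrow> 'a::ring set) \<Rightarrow> ('a \<times> 'g) option set" where
  "scp_carrier G D = insert None {Some (a, x) | a x. x \<in> G \<and> a \<in> D x \<and> a \<noteq> 0}"

definition scp_mult ::
  "'g set \<Rightarrow> ('g \<Rightarrow> 'g \<Rightarrow> 'g) \<Rightarrow> ('g \<Rightarrow> 'g) \<Rightarrow> ('k \<Rightarrow> 'a::ring \<Rightarrow> 'a) \<Rightarrow> ('g \<Rightarrow> 'a set) \<Rightarrow>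
   ('g \<Rightarrow> 'a \<Rightarrow> 'a) \<Rightarrow> ('g \<Rightarrow> 'g \<Rightarrow> 'k) \<Rightarrow> ('a \<times> 'g) option \<Rightarrow> ('a \<times> 'g) option \<Rightarrow> ('a \<times> 'g) option" where
  "scp_mult G gm gi smul D \<theta> \<sigma> s t =
     (case (s, t) of
        (Some (a, x), Some (b, y)) \<Rightarrow>
          if composable G gm gi x y then
            (let c = smul (\<sigma> x y) (\<theta> x (inv_into (D (gi x)) (\<theta> x) a * b))
             in if c = 0 then None else Some (c, gm x y))
          else None
      | _ \<Rightarrow> None)"

definition scp_smul :: "('k \<Rightarrow> 'a::ring \<Rightarrow> 'a) \<Rightarrow> 'k \<Rightarrow> ('a \<times> 'g) option \<Rightarrow> ('a \<times> 'g) option" where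
  "scp_smul smul c s =
     (case s of None \<Rightarrow> None
      | Some (a, x) \<Rightarrow> (let b = smul c a in if b = 0 then None else Some (b, x)))"

definition scp_to_rcp :: "('a::ring \<times> 'g) option \<Rightarrow> ('g \<Rightarrow> 'a)" where
  "scp_to_rcp s = (case s of None \<Rightarrow> (\<lambda>g. 0) | Some (a, x) \<Rightarrow> (\<lambda>g. if g = x then a else 0))"

definition K_semigroup_mono ::
  "('s \<Rightarrow> 't) \<Rightarrow> 's set \<Rightarrow> ('s \<Rightarrow> 's \<Rightarrow> 's) \<Rightarrow> ('k \<Rightarrow> 's \<Rightarrow> 's) \<Rightarrow> 's \<Rightarrow>
   't set \<Rightarrow> ('t \<Rightarrow> 't \<Rightarrow> 't) \<Rightarrow> ('k \<Rightarrow> 't \<Rightarrow> 't) \<Rightarrow> 't \<Rightarrow> bool" where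
  "K_semigroup_mono \<phi> S mS sS zS T mT sT zT \<longleftrightarrow>
     (\<forall>s\<in>S. \<phi> s \<in> T) \<and> inj_on \<phi> S \<and>
     (\<forall>s\<in>S. \<forall>t\<in>S. \<phi> (mS s t) = mT (\<phi> s) (\<phi> t)) \<and>
     (\<forall>c. \<forall>s\<in>S. \<phi> (sS c s) = sT c (\<phi> s)) \<and>
     \<phi> zS = zT"

end

theory Submission imports Defs begin

(* Both images of a\<delta>_x and b\<delta>_y live in the single degree xy. In the ring crossed product
   the coefficient is w_{x,y} applied to c = \<alpha>_x(\<alpha>_x^{-1}(a) b). Since c lies in D_x \<inter> D_{xy},
   which equals D_x D_{xy} because D_x is unital, the twist acts on c as the scalar k(x,y), so the
   coefficient is k(x,y) c, exactly the semigroup product; when it vanishes, the semigroup product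
   collapses to the zero of L/I. That c lies in D_{xy} at all rests on \<alpha>_{x^{-1}} \<alpha>_x = id,
   which needs the twist w_{x^{-1},x} to act symmetrically (it is a scalar here). *)

lemma groupoid_inverse:
  assumes "groupoid G gm gi" and "x \<in> G"
  shows groupoid_inv_closed: "gi x \<in> G"
    and groupoid_inv_inv: "gi (gi x) = x"
    and composable_inv_left: "composable G gm gi (gi x) x"
    and composable_inv_right: "composable G gm gi x (gi x)"
    and gran_inv: "gran gm gi (gi x) = gdom gm gi x"
    and gdom_inv: "gdom gm gi (gi x) = gran gm gi x"
  using assms unfolding groupoid_def composable_def gdom_def gran_def by auto

lemma groupoid_mult:
  assumes "groupoid G gm gi" and "composable G gm gi x y"
  shows groupoid_mult_closed: "gm x y \<in> G"
    and gdom_mult: "gdom gm gi (gm x y) = gdom gm gi y"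
    and gran_mult: "gran gm gi (gm x y) = gran gm gi x"
  using assms unfolding groupoid_def by auto

lemma groupoid_assoc:
  assumes "groupoid G gm gi" and "composable G gm gi x y" and "composable G gm gi y z"
  shows "gm (gm x y) z = gm x (gm y z)"
  using assms unfolding groupoid_def by blast

lemma groupoid_units:
  assumes "groupoid G gm gi" and "x \<in> G"
  shows groupoid_mult_gdom: "gm x (gdom gm gi x) = x"
    and groupoid_gran_mult: "gm (gran gm gi x) x = x"
  using assms unfolding groupoid_def by auto

lemma groupoid_inv_mult:
  assumes g: "groupoid G gm gi" and uv: "composable G gm gi u v"
  shows "gi (gm u v) = gm (gi v) (gi u)"
proof -
  define q where "q = gm u v"
  have u: "u \<in> G" and v: "v \<in> G" and du: "gdom gm gi u = gran gm gi v"
    using uv by (auto simp: composable_def)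
  have q: "q \<in> G" "gdom gm gi q = gdom gm gi v" "gran gm gi q = gran gm gi u"
    using groupoid_mult[OF g uv] by (simp_all add: q_def)
  have q_vinv: "composable G gm gi q (gi v)"
    using q v by (simp add: composable_def gran_inv[OF g] groupoid_inv_closed[OF g])
  have qinv_u: "composable G gm gi (gi q) u"
    using q u by (simp add: composable_def gdom_inv[OF g] groupoid_inv_closed[OF g])
  have "u = gm u (gm v (gi v))"
    using groupoid_mult_gdom[OF g u] du by (simp add: gran_def)
  also have "\<dots> = gm q (gi v)"
    using groupoid_assoc[OF g uv composable_inv_right[OF g v]] by (simp add: q_def)
  finally have u_eq: "u = gm q (gi v)" .
  have "gm (gi q) u = gm (gm (gi q) q) (gi v)"
    using groupoid_assoc[OF g composable_inv_left[OF g q(1)] q_vinv] u_eq by simp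
  also have "\<dots> = gm (gran gm gi (gi v)) (gi v)"
    using q(2) by (simp add: gran_inv[OF g v] gdom_def)
  also have "\<dots> = gi v"
    using groupoid_gran_mult[OF g groupoid_inv_closed[OF g v]] .
  finally have qinv_u_eq: "gm (gi q) u = gi v" .
  have "gi q = gm (gi q) (gm u (gi u))"
    using groupoid_mult_gdom[OF g groupoid_inv_closed[OF g q(1)]] q(3)
    by (simp add: gdom_inv[OF g q(1)] gran_def)
  also have "\<dots> = gm (gi v) (gi u)"
    using groupoid_assoc[OF g qinv_u composable_inv_right[OF g u]] qinv_u_eq by simp
  finally show ?thesis by (simp add: q_def)
qed

lemma ideal_prod_if_unital:
  assumes "unital_set I" and "p \<in> I" and "p \<in> J"
  shows "p \<in> ideal_prod I J"
proof -
  obtain u where "u \<in> I" "u * p = p" using assms unfolding unital_set_def by blast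
  then show ?thesis using ideal_prod.prod[of u I p J] assms by simp
qed

lemma alg_ideal_subset: "alg_ideal smul R I \<Longrightarrow> a \<in> I \<Longrightarrow> a \<in> R"
  unfolding alg_ideal_def by blast

lemma alg_ideal_mult_left: "alg_ideal smul R I \<Longrightarrow> r \<in> R \<Longrightarrow> a \<in> I \<Longrightarrow> r * a \<in> I"
  unfolding alg_ideal_def by blast

lemma alg_ideal_mult_right: "alg_ideal smul R I \<Longrightarrow> r \<in> R \<Longrightarrow> a \<in> I \<Longrightarrow> a * r \<in> I"
  unfolding alg_ideal_def by blast

lemma K_algebra_smul_zero:
  assumes "K_algebra smul"
  shows "smul c (0::'a::ring) = 0"
proof -
  have "smul c (0 + 0) = smul c 0 + smul c (0::'a)" using assms unfolding K_algebra_def by blast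
  then show ?thesis by simp
qed

locale unital_twisted_partial_action =
  fixes G :: "'g set" and gm :: "'g \<Rightarrow> 'g \<Rightarrow> 'g" and gi :: "'g \<Rightarrow> 'g"
    and smul :: "'k::field \<Rightarrow> 'a::ring \<Rightarrow> 'a"
    and D :: "'g \<Rightarrow> 'a set" and \<alpha> :: "'g \<Rightarrow> 'a \<Rightarrow> 'a"
    and w :: "'g \<Rightarrow> 'g \<Rightarrow> ('a \<Rightarrow> 'a) \<times> ('a \<Rightarrow> 'a)"
  assumes groupoid: "groupoid G gm gi"
    and action: "ring_twisted_partial_action G gm gi smul D \<alpha> w"
    and unital: "\<forall>g\<in>G. unital_set (D g)"
begin

lemma ideal_of_gran: "g \<in> G \<Longrightarrow> alg_ideal smul (D (gran gm gi g)) (D g)"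
  using action unfolding ring_twisted_partial_action_def by blast

lemma alpha_bij: "g \<in> G \<Longrightarrow> bij_betw (\<alpha> g) (D (gi g)) (D g)"
  using action unfolding ring_twisted_partial_action_def by blast

lemma alpha_gdom: "g \<in> G \<Longrightarrow> a \<in> D (gdom gm gi g) \<Longrightarrow> \<alpha> (gdom gm gi g) a = a"
  using action unfolding ring_twisted_partial_action_def by blast

lemma preim_subset:
  "composable G gm gi g h \<Longrightarrow> preim D \<alpha> gi h (D (gi g) \<inter> D h) \<subseteq> D (gi (gm g h))"
  using action unfolding ring_twisted_partial_action_def by blast

lemma alpha_comp_twisted:
  assumes "composable G gm gi g h"
  obtains w' where "inverse_multiplier (ideal_prod (D g) (D (gm g h))) (w g h) w'"
    and "\<forall>a \<in> preim D \<alpha> gi h (D (gi g) \<inter> D h).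
           \<alpha> g (\<alpha> h a) = snd w' (fst (w g h) (\<alpha> (gm g h) a))"
  using action assms unfolding ring_twisted_partial_action_def by blast

lemma D_inv_subset_D_gdom: "x \<in> G \<Longrightarrow> D (gi x) \<subseteq> D (gdom gm gi x)"
  using ideal_of_gran[OF groupoid_inv_closed[OF groupoid]] alg_ideal_subset
  by (metis gran_inv[OF groupoid] subsetI)

text \<open>In general \<alpha>_{x^{-1}} \<alpha>_x is conjugation by the twist w_{x^{-1},x}, so it is the identity
  exactly when that twist acts alike from both sides.\<close>

lemma alpha_inv_alpha:
  assumes x: "x \<in> G" and p: "p \<in> D (gi x)"
    and sym: "\<forall>c\<in>ideal_prod (D (gi x)) (D (gm (gi x) x)). fst (w (gi x) x) c = snd (w (gi x) x) c"
  shows "\<alpha> (gi x) (\<alpha> x p) = p"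
proof -
  have gdom_x: "gm (gi x) x = gdom gm gi x" by (simp add: gdom_def)
  obtain w' where w': "inverse_multiplier (ideal_prod (D (gi x)) (D (gm (gi x) x))) (w (gi x) x) w'"
    and comp: "\<forall>a \<in> preim D \<alpha> gi x (D (gi (gi x)) \<inter> D x).
                 \<alpha> (gi x) (\<alpha> x a) = snd w' (fst (w (gi x) x) (\<alpha> (gm (gi x) x) a))"
    using alpha_comp_twisted[OF composable_inv_left[OF groupoid x]] by blast
  have p_gdom: "p \<in> D (gdom gm gi x)" using D_inv_subset_D_gdom[OF x] p by blast
  have "\<alpha> x p \<in> D x" using alpha_bij[OF x] p by (auto simp: bij_betw_def)
  then have "p \<in> preim D \<alpha> gi x (D (gi (gi x)) \<inter> D x)"
    using p by (simp add: preim_def groupoid_inv_inv[OF groupoid x])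
  then have "\<alpha> (gi x) (\<alpha> x p) = snd w' (fst (w (gi x) x) p)"
    using comp alpha_gdom[OF x p_gdom] gdom_x by simp
  also have p_prod: "p \<in> ideal_prod (D (gi x)) (D (gm (gi x) x))"
    using ideal_prod_if_unital unital groupoid_inv_closed[OF groupoid x] p p_gdom gdom_x by auto
  then have "snd w' (fst (w (gi x) x) p) = snd w' (snd (w (gi x) x) p)" using sym by simp
  also have "\<dots> = p" using w' p_prod unfolding inverse_multiplier_def by blast
  finally show ?thesis .
qed

end

locale scalar_twisted_partial_action = unital_twisted_partial_action +
  fixes k :: "'g \<Rightarrow> 'g \<Rightarrow> 'k::field"
  assumes twist_scalar: "\<forall>x y. composable G gm gi x y \<longrightarrow>
           (\<forall>c\<in>ideal_prod (D x) (D (gm x y)).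
              fst (w x y) c = smul (k x y) c \<and> snd (w x y) c = smul (k x y) c)"
begin

lemma alpha_inv_alpha_scalar: "x \<in> G \<Longrightarrow> p \<in> D (gi x) \<Longrightarrow> \<alpha> (gi x) (\<alpha> x p) = p"
  using alpha_inv_alpha twist_scalar composable_inv_left[OF groupoid] by simp

lemma twisted_product_mem:
  assumes xy: "composable G gm gi x y" and a: "a \<in> D x" and b: "b \<in> D y"
  shows "\<alpha> x (inv_into (D (gi x)) (\<alpha> x) a * b) \<in> D x \<inter> D (gm x y)"
proof -
  have x: "x \<in> G" and y: "y \<in> G" and dr: "gdom gm gi x = gran gm gi y"
    using xy by (auto simp: composable_def)
  define a' where "a' = inv_into (D (gi x)) (\<alpha> x) a"
  have a': "a' \<in> D (gi x)"
    using alpha_bij[OF x] a unfolding a'_def by (metis bij_betw_def inv_into_into)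
  have ideal_inv: "alg_ideal smul (D (gran gm gi y)) (D (gi x))"
    using ideal_of_gran[OF groupoid_inv_closed[OF groupoid x]] dr by (simp add: gran_inv[OF groupoid x])
  have ideal_y: "alg_ideal smul (D (gran gm gi y)) (D y)" using ideal_of_gran[OF y] .
  have ab_inv: "a' * b \<in> D (gi x)"
    using alg_ideal_mult_right[OF ideal_inv alg_ideal_subset[OF ideal_y b] a'] .
  have ab_y: "a' * b \<in> D y"
    using alg_ideal_mult_left[OF ideal_y alg_ideal_subset[OF ideal_inv a'] b] .
  define c where "c = \<alpha> x (a' * b)"
  have c_x: "c \<in> D x" using alpha_bij[OF x] ab_inv unfolding c_def bij_betw_def by blast
  have yinv_xinv: "composable G gm gi (gi y) (gi x)"
    using x y dr by (simp add: composable_def groupoid_inverse[OF groupoid])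
  have "c \<in> preim D \<alpha> gi (gi x) (D (gi (gi y)) \<inter> D (gi x))"
    using c_x ab_inv ab_y alpha_inv_alpha_scalar[OF x ab_inv]
    by (simp add: preim_def c_def groupoid_inverse[OF groupoid] x y)
  then have "c \<in> D (gi (gm (gi y) (gi x)))" using preim_subset[OF yinv_xinv] by blast
  then have "c \<in> D (gm x y)"
    by (simp add: groupoid_inv_mult[OF groupoid yinv_xinv] groupoid_inverse[OF groupoid] x y)
  with c_x show ?thesis by (simp add: c_def a'_def)
qed

lemma twist_on_product:
  assumes "composable G gm gi x y" and "a \<in> D x" and "b \<in> D y"
  defines "c \<equiv> \<alpha> x (inv_into (D (gi x)) (\<alpha> x) a * b)"
  shows "snd (w x y) c = smul (k x y) c"
proof -
  have "c \<in> ideal_prod (D x) (D (gm x y))"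
    using twisted_product_mem[OF assms(1-3)] ideal_prod_if_unital unital assms(1)
    unfolding c_def composable_def by blast
  then show ?thesis using twist_scalar assms(1) by blast
qed

end

lemma scp_to_rcp_simps [simp]:
  "scp_to_rcp None = (\<lambda>g. 0)"
  "scp_to_rcp (Some (a, x)) = (\<lambda>g. if g = x then a else 0)"
  by (simp_all add: scp_to_rcp_def)

lemma scp_carrier_cases:
  assumes "s \<in> scp_carrier G D"
  obtains (zero) "s = None"
    | (single) a x where "s = Some (a, x)" "x \<in> G" "a \<in> D x" "a \<noteq> 0"
  using assms unfolding scp_carrier_def by blast

lemma scp_to_rcp_mem_rcp_carrier:
  assumes "s \<in> scp_carrier G D"
  shows "scp_to_rcp s \<in> rcp_carrier G D"
  using assms
proof (cases rule: scp_carrier_cases)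
  case (single a x)
  then have "{g. (if g = x then a else 0) \<noteq> 0} = {x}" by auto
  with single show ?thesis by (simp add: rcp_carrier_def)
qed (simp add: rcp_carrier_def)

lemma inj_on_scp_to_rcp: "inj_on scp_to_rcp (scp_carrier G D)"
proof (rule inj_onI)
  fix s t assume s: "s \<in> scp_carrier G D" and t: "t \<in> scp_carrier G D"
    and eq: "scp_to_rcp s = scp_to_rcp t"
  from s t show "s = t"
  proof (cases rule: scp_carrier_cases[case_product scp_carrier_cases])
    case (single_single a x b y)
    then have "a = (if x = y then b else 0)" using fun_cong[OF eq, of x] by simp
    then have "x = y" "a = b" using \<open>a \<noteq> 0\<close> by (simp_all split: if_splits)
    with single_single show ?thesis by simp
  qed (use eq in \<open>auto simp: fun_eq_iff split: if_splits\<close>)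
qed

lemma scp_to_rcp_smul:
  assumes "K_algebra smul"
  shows "scp_to_rcp (scp_smul smul c s) = rcp_smul smul c (scp_to_rcp s)"
  using K_algebra_smul_zero[OF assms]
  by (auto simp: scp_smul_def rcp_smul_def Let_def fun_eq_iff split: option.splits)

lemma rcp_mult_zero_left: "rcp_mult G gm gi D \<alpha> w (\<lambda>g. 0) h = (\<lambda>g. 0)"
  unfolding rcp_mult_def by simp

lemma rcp_mult_zero_right: "rcp_mult G gm gi D \<alpha> w f (\<lambda>g. 0) = (\<lambda>g. 0)"
  unfolding rcp_mult_def by simp

lemma rcp_mult_single:
  assumes "a \<noteq> 0" and "b \<noteq> 0"
  shows "rcp_mult G gm gi D \<alpha> w (\<lambda>g. if g = x then a else 0) (\<lambda>g. if g = y then b else 0) =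
    (\<lambda>z. if composable G gm gi x y \<and> z = gm x y
         then snd (w x y) (\<alpha> x (inv_into (D (gi x)) (\<alpha> x) a * b)) else 0)"
proof
  fix z
  have "{(x', y'). composable G gm gi x' y' \<and> gm x' y' = z \<and> (if x' = x then a else 0) \<noteq> 0
          \<and> (if y' = y then b else 0) \<noteq> 0}
        = (if composable G gm gi x y \<and> z = gm x y then {(x, y)} else {})"
    using assms by (auto split: if_splits)
  then show "rcp_mult G gm gi D \<alpha> w (\<lambda>g. if g = x then a else 0) (\<lambda>g. if g = y then b else 0) z =
    (if composable G gm gi x y \<and> z = gm x y
         then snd (w x y) (\<alpha> x (inv_into (D (gi x)) (\<alpha> x) a * b)) else 0)"
    unfolding rcp_mult_def by simp
qed

lemma (in scalar_twisted_partial_action) scp_to_rcp_mult: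
  assumes s: "s \<in> scp_carrier G D" and t: "t \<in> scp_carrier G D"
  shows "scp_to_rcp (scp_mult G gm gi smul D \<alpha> k s t) =
    rcp_mult G gm gi D \<alpha> w (scp_to_rcp s) (scp_to_rcp t)"
  using s t
proof (cases rule: scp_carrier_cases[case_product scp_carrier_cases])
  case (single_single a x b y)
  show ?thesis
  proof (cases "composable G gm gi x y")
    case True
    then show ?thesis
      using single_single twist_on_product[OF True, of a b]
      by (simp add: scp_mult_def rcp_mult_single Let_def fun_eq_iff)
  qed (use single_single in \<open>simp add: scp_mult_def rcp_mult_single\<close>)
qed (simp_all add: scp_mult_def rcp_mult_zero_left rcp_mult_zero_right)

theorem mainTheorem13:
  fixes G :: "'g set" and gm :: "'g \<Rightarrow> 'g \<Rightarrow> 'g" and gi :: "'g \<Rightarrow> 'g"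
    and smul :: "'k::field \<Rightarrow> 'a::ring \<Rightarrow> 'a"
    and D :: "'g \<Rightarrow> 'a set" and \<alpha> :: "'g \<Rightarrow> 'a \<Rightarrow> 'a"
    and w :: "'g \<Rightarrow> 'g \<Rightarrow> ('a \<Rightarrow> 'a) \<times> ('a \<Rightarrow> 'a)" and k :: "'g \<Rightarrow> 'g \<Rightarrow> 'k"
  assumes "groupoid G gm gi"
    and "K_algebra smul"
    and "K_cancellative smul 0"
    and "ring_twisted_partial_action G gm gi smul D \<alpha> w"
    and "\<forall>g\<in>G. unital_set (D g)"
    and "\<forall>x y. composable G gm gi x y \<longrightarrow>
           (\<forall>c\<in>ideal_prod (D x) (D (gm x y)).
              fst (w x y) c = smul (k x y) c \<and> snd (w x y) c = smul (k x y) c)"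
    and "\<forall>x y. \<not> composable G gm gi x y \<longrightarrow> k x y = 0"
  shows "K_semigroup_mono scp_to_rcp
           (scp_carrier G D) (scp_mult G gm gi smul D \<alpha> k) (scp_smul smul) None
           (rcp_carrier G D) (rcp_mult G gm gi D \<alpha> w) (rcp_smul smul) rcp_zero"
proof -
  interpret scalar_twisted_partial_action G gm gi smul D \<alpha> w k
    using assms(1,4-6) by unfold_locales
  show ?thesis
    unfolding K_semigroup_mono_def
    by (simp add: scp_to_rcp_mem_rcp_carrier inj_on_scp_to_rcp scp_to_rcp_mult
        scp_to_rcp_smul[OF assms(2)] rcp_zero_def)
qed

end
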